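(* Let $\boldsymbol{Y}_t$ be an $n\times 1$ vector of observed variables generated by the structural vector moving average model $$\boldsymbol{Y}_t=\sum_{j=0}^{\infty}\boldsymbol{\Theta}_j\boldsymbol{\varepsilon}_{t-j},$$ where $\boldsymbol{\varepsilon}_t=(\varepsilon_{1,t},\dots,\varepsilon_{m,t})'$ is an $m\times1$ vector of unobserved structural shocks with $E[\boldsymbol{\varepsilon}_t]=0$, $E[\boldsymbol{\varepsilon}_t\boldsymbol{\varepsilon}_t']>0$ and mutually uncorrelated components, and each $\boldsymbol{\Theta}_h$ is an $n\times m$ matrix. Let $x_t$ be the first element and $y_t$ the last element of $\boldsymbol{Y}_t$, let $\theta_{h,xs}$ and $\theta_{h,ys}$ denote the $(1,s)$-th and $(n,s)$-th elements of $\boldsymbol{\Theta}_h$. Fix $1\le S\le m$ and let $\xi_t=\sum_{s=1}^S\varepsilon_{s,t}$. Let $z_t$ be a random variable satisfying: (i) $E[z_t\xi_t]\neq0$; (ii) $E[z_t\varepsilon_{s,t}]=0$ for all $s=S+1,\dots,m$; (iii) $E[z_t\boldsymbol{\varepsilon}_{t+j}]=0$ for all $j\ne0$. Write $\alpha_s=E[z_t\varepsilon_{s,t}]$. For $h\ge0$ define $\widetilde{y}_{t+h}=\sum_{j=0}^h y_{t+j}$, $\widetilde{x}_{t+h}=\sum_{j=0}^h x_{t+j}$, $\widetilde{\theta}_{h,ys}=\sum_{j=0}^h\theta_{j,ys}$ and $\widetilde{\theta}_{h,xs}=\sum_{j=0}^h\theta_{j,xs}$. Suppose $\widetilde{\theta}_{h,xs}\neq0$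 for all $s=1,\dots,S$. Then for every $h=0,1,2,\dots$ such that $Cov(\widetilde{x}_{t+h},z_t)\neq 0$, $$\widetilde{\beta}_h\equiv\frac{Cov(\widetilde{y}_{t+h},z_t)}{Cov(\widetilde{x}_{t+h},z_t)}=\sum_{s=1}^S\left(\frac{\alpha_s\widetilde{\theta}_{h,xs}}{\sum_{s'=1}^S\alpha_{s'}\widetilde{\theta}_{h,xs'}}\right)\frac{\widetilde{\theta}_{h,ys}}{\widetilde{\theta}_{h,xs}}.$$
   Context: All moments involved are assumed finite and the moving average series is assumed to converge so that covariances can be computed term by term. *)

theory Defs
  imports "HOL-Probability.Probability"
begin

definition cov :: "'a measure \<Rightarrow> ('a \<Rightarrow> real) \<Rightarrow> ('a \<Rightarrow> real) \<Rightarrow> real" where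
  "cov M X Z = (\<integral>\<omega>. (X \<omega> - (\<integral>\<omega>'. X \<omega>' \<partial>M)) * (Z \<omega> - (\<integral>\<omega>'. Z \<omega>' \<partial>M)) \<partial>M)"

end

theory Submission
  imports Defs
begin

(* Only the shocks dated t are correlated with the instrument, so in the series for
   Cov(y_{t+j}, z) all lags but the j-th drop out, and Cov(y_{t+j}, z) = sum_s alpha_s theta_{j,ys}.
   Summing over j = 0..h gives Cov(y~_{t+h}, z) = sum_{s<=S} alpha_s theta~_{h,ys}, likewise for x,
   and the ratio of two such linear combinations is the stated weighted average of the
   ratios theta~_{h,ys} / theta~_{h,xs}.
   The moving-average representation enters only through the hypothesis that covariances
   may be computed term by term. *)

lemma abs_mult_le_sum_squares:
  fixes a b :: real
  shows "\<bar>a * b\<bar> \<le> a\<^sup>2 + b\<^sup>2"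
proof -
  have "2 * \<bar>a * b\<bar> \<le> a\<^sup>2 + b\<^sup>2"
    using sum_squares_bound[of "\<bar>a\<bar>" "\<bar>b\<bar>"] by (simp add: abs_mult)
  then show ?thesis
    using abs_ge_zero[of "a * b"] by linarith
qed

lemma integrable_mult_of_square_integrable:
  fixes f g :: "'a \<Rightarrow> real"
  assumes "f \<in> borel_measurable M" "g \<in> borel_measurable M"
    and "integrable M (\<lambda>x. (f x)\<^sup>2)" "integrable M (\<lambda>x. (g x)\<^sup>2)"
  shows "integrable M (\<lambda>x. f x * g x)"
proof (rule Bochner_Integration.integrable_bound)
  show "integrable M (\<lambda>x. (f x)\<^sup>2 + (g x)\<^sup>2)"
    using assms by simp
  show "AE x in M. norm (f x * g x) \<le> norm ((f x)\<^sup>2 + (g x)\<^sup>2)"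
    using abs_mult_le_sum_squares by simp
qed (use assms in simp)

lemma (in prob_space) cov_eq_expectation_mult_diff:
  fixes X Z :: "'a \<Rightarrow> real"
  assumes "integrable M X" "integrable M Z" "integrable M (\<lambda>x. X x * Z x)"
  shows "cov M X Z = expectation (\<lambda>x. X x * Z x) - expectation X * expectation Z"
proof -
  let ?a = "expectation X" and ?b = "expectation Z"
  have "cov M X Z = expectation (\<lambda>x. X x * Z x - ?b * X x - ?a * Z x + ?a * ?b)"
    unfolding cov_def by (simp add: algebra_simps)
  also have "\<dots> = expectation (\<lambda>x. X x * Z x) - ?b * ?a - ?a * ?b + ?a * ?b"
    using assms by (simp add: prob_space)
  finally show ?thesis by simp
qed

lemma (in prob_space) cov_eq_expectation_mult_if_mean_zero:
  fixes X Z :: "'a \<Rightarrow> real"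
  assumes "X \<in> borel_measurable M" "Z \<in> borel_measurable M"
    and "integrable M (\<lambda>x. (X x)\<^sup>2)" "integrable M (\<lambda>x. (Z x)\<^sup>2)"
    and "expectation X = 0"
  shows "cov M X Z = expectation (\<lambda>x. Z x * X x)"
  using cov_eq_expectation_mult_diff[OF square_integrable_imp_integrable square_integrable_imp_integrable
      integrable_mult_of_square_integrable] assms
  by (simp add: mult.commute)

lemma (in prob_space) cov_sum_left:
  fixes X :: "'i \<Rightarrow> 'a \<Rightarrow> real" and Z :: "'a \<Rightarrow> real"
  assumes "\<And>j. j \<in> A \<Longrightarrow> X j \<in> borel_measurable M" "Z \<in> borel_measurable M"
    and "\<And>j. j \<in> A \<Longrightarrow> integrable M (\<lambda>x. (X j x)\<^sup>2)" "integrable M (\<lambda>x. (Z x)\<^sup>2)"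
  shows "cov M (\<lambda>x. \<Sum>j\<in>A. X j x) Z = (\<Sum>j\<in>A. cov M (X j) Z)"
proof -
  have X_int: "integrable M (X j)" and XZ_int: "integrable M (\<lambda>x. X j x * Z x)" if "j \<in> A" for j
    using that square_integrable_imp_integrable[OF assms(1,3)]
      integrable_mult_of_square_integrable[OF assms(1,2) assms(3,4)] by auto
  have Z_int: "integrable M Z"
    using square_integrable_imp_integrable[OF assms(2,4)] .
  have "cov M (\<lambda>x. \<Sum>j\<in>A. X j x) Z
      = expectation (\<lambda>x. \<Sum>j\<in>A. X j x * Z x) - expectation (\<lambda>x. \<Sum>j\<in>A. X j x) * expectation Z"
    using X_int XZ_int Z_int cov_eq_expectation_mult_diff[of "\<lambda>x. \<Sum>j\<in>A. X j x" Z]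
    by (simp add: sum_distrib_right)
  also have "\<dots> = (\<Sum>j\<in>A. expectation (\<lambda>x. X j x * Z x) - expectation (X j) * expectation Z)"
    using X_int XZ_int by (simp add: sum_distrib_right sum_subtractf)
  also have "\<dots> = (\<Sum>j\<in>A. cov M (X j) Z)"
    using X_int XZ_int Z_int cov_eq_expectation_mult_diff by simp
  finally show ?thesis .
qed

lemma moving_average_sums_single_date:
  fixes \<Theta> :: "nat \<Rightarrow> 's \<Rightarrow> real" and c :: "int \<Rightarrow> 's \<Rightarrow> real"
  assumes "(\<lambda>k. \<Sum>s\<in>A. \<Theta> k s * c (t + int j - int k) s) sums C"
    and "\<And>v s. v \<noteq> t \<Longrightarrow> s \<in> A \<Longrightarrow> c v s = 0"
  shows "C = (\<Sum>s\<in>A. \<Theta> j s * c t s)"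
proof -
  have "(\<lambda>k. \<Sum>s\<in>A. \<Theta> k s * c (t + int j - int k) s)
      = (\<lambda>k. if k = j then \<Sum>s\<in>A. \<Theta> j s * c t s else 0)"
    using assms(2) by fastforce
  with assms(1) show ?thesis
    using sums_single[of j "\<lambda>_. \<Sum>s\<in>A. \<Theta> j s * c t s"] sums_unique2 by fastforce
qed

lemma sum_ratio_eq_weighted_average:
  fixes a x y :: "'s \<Rightarrow> real"
  assumes "\<And>s. s \<in> A \<Longrightarrow> x s \<noteq> 0"
  shows "(\<Sum>s\<in>A. a s * y s) / (\<Sum>s\<in>A. a s * x s)
       = (\<Sum>s\<in>A. (a s * x s / (\<Sum>s'\<in>A. a s' * x s')) * (y s / x s))"
  using assms by (simp add: sum_divide_distrib)

theorem corollary1: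
  fixes M :: "'a measure"
    and eps :: "int \<Rightarrow> nat \<Rightarrow> 'a \<Rightarrow> real"   \<comment> \<open>eps t s = s-th structural shock at time t, s = 1..m\<close>
    and Theta :: "nat \<Rightarrow> nat \<Rightarrow> nat \<Rightarrow> real"  \<comment> \<open>Theta h i s = (i,s) entry of Theta_h\<close>
    and Y :: "int \<Rightarrow> nat \<Rightarrow> 'a \<Rightarrow> real"     \<comment> \<open>Y t i = i-th component of Y_t, i = 1..n\<close>
    and z :: "'a \<Rightarrow> real"
    and n m S :: nat and t :: int and h :: nat
  assumes P: "prob_space M"
    and n: "n \<ge> 1"
    and S: "1 \<le> S" "S \<le> m"
    and eps_meas: "\<And>t s. eps t s \<in> borel_measurable M"
    and eps_L2: "\<And>t s. integrable M (\<lambda>\<omega>. (eps t s \<omega>)\<^sup>2)"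
    and eps_mean: "\<And>t s. s \<in> {1..m} \<Longrightarrow> (\<integral>\<omega>. eps t s \<omega> \<partial>M) = 0"
    and eps_var_pos: "\<And>t s. s \<in> {1..m} \<Longrightarrow> (\<integral>\<omega>. (eps t s \<omega>)\<^sup>2 \<partial>M) > 0"
    and eps_uncorr: "\<And>t s s'. s \<in> {1..m} \<Longrightarrow> s' \<in> {1..m} \<Longrightarrow> s \<noteq> s' \<Longrightarrow>
                       (\<integral>\<omega>. eps t s \<omega> * eps t s' \<omega> \<partial>M) = 0"
    and Y_summable: "\<And>t i \<omega>. i \<in> {1..n} \<Longrightarrow>
                       summable (\<lambda>j. \<Sum>s=1..m. Theta j i s * eps (t - int j) s \<omega>)"
    and Y_def: "\<And>t i \<omega>. i \<in> {1..n} \<Longrightarrow>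
                       Y t i \<omega> = (\<Sum>j. \<Sum>s=1..m. Theta j i s * eps (t - int j) s \<omega>)"
    and Y_L2: "\<And>t i. i \<in> {1..n} \<Longrightarrow> integrable M (\<lambda>\<omega>. (Y t i \<omega>)\<^sup>2)"
    and Y_meas: "\<And>t i. i \<in> {1..n} \<Longrightarrow> Y t i \<in> borel_measurable M"
    and z_meas: "z \<in> borel_measurable M"
    and z_L2: "integrable M (\<lambda>\<omega>. (z \<omega>)\<^sup>2)"
    and termwise: "\<And>t' i. i \<in> {1..n} \<Longrightarrow>
       (\<lambda>j. \<Sum>s=1..m. Theta j i s * cov M (eps (t' - int j) s) z) sums cov M (Y t' i) z"
    and inst_relevance: "(\<integral>\<omega>. z \<omega> * (\<Sum>s=1..S. eps t s \<omega>) \<partial>M) \<noteq> 0"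
    and inst_exog: "\<And>s. s \<in> {S+1..m} \<Longrightarrow> (\<integral>\<omega>. z \<omega> * eps t s \<omega> \<partial>M) = 0"
    and inst_lead_lag: "\<And>j s. j \<noteq> 0 \<Longrightarrow> s \<in> {1..m} \<Longrightarrow> (\<integral>\<omega>. z \<omega> * eps (t + j) s \<omega> \<partial>M) = 0"
    and theta_x_nz: "\<And>s. s \<in> {1..S} \<Longrightarrow> (\<Sum>j=0..h. Theta j 1 s) \<noteq> 0"
    and cov_x_nz: "cov M (\<lambda>\<omega>. \<Sum>j=0..h. Y (t + int j) 1 \<omega>) z \<noteq> 0"
  shows
    "cov M (\<lambda>\<omega>. \<Sum>j=0..h. Y (t + int j) n \<omega>) z / cov M (\<lambda>\<omega>. \<Sum>j=0..h. Y (t + int j) 1 \<omega>) z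
     = (\<Sum>s=1..S.
          ((\<integral>\<omega>. z \<omega> * eps t s \<omega> \<partial>M) * (\<Sum>j=0..h. Theta j 1 s)
            / (\<Sum>s'=1..S. (\<integral>\<omega>. z \<omega> * eps t s' \<omega> \<partial>M) * (\<Sum>j=0..h. Theta j 1 s')))
          * ((\<Sum>j=0..h. Theta j n s) / (\<Sum>j=0..h. Theta j 1 s)))"
proof -
  interpret prob_space M by (rule P)
  define \<alpha> where "\<alpha> s = (\<integral>\<omega>. z \<omega> * eps t s \<omega> \<partial>M)" for s
  have cov_eps: "cov M (eps v s) z = (\<integral>\<omega>. z \<omega> * eps v s \<omega> \<partial>M)" if "s \<in> {1..m}" for v s
    using cov_eq_expectation_mult_if_mean_zero eps_meas z_meas eps_L2 z_L2 eps_mean that by blast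
  have cov_eps_other_dates: "cov M (eps v s) z = 0" if "v \<noteq> t" "s \<in> {1..m}" for v s
    using inst_lead_lag[of "v - t" s] cov_eps that by simp
  have cov_Y: "cov M (Y (t + int j) i) z = (\<Sum>s=1..S. Theta j i s * \<alpha> s)" if "i \<in> {1..n}" for i j
  proof -
    have "cov M (Y (t + int j) i) z = (\<Sum>s=1..m. Theta j i s * \<alpha> s)"
      using moving_average_sums_single_date[OF termwise[OF that] cov_eps_other_dates]
      by (simp add: cov_eps \<alpha>_def)
    also have "\<dots> = (\<Sum>s=1..S. Theta j i s * \<alpha> s)"
      using S inst_exog by (intro sum.mono_neutral_right) (auto simp: \<alpha>_def)
    finally show ?thesis .
  qed
  have cov_cumulative:
    "cov M (\<lambda>\<omega>. \<Sum>j=0..h. Y (t + int j) i \<omega>) z = (\<Sum>s=1..S. \<alpha> s * (\<Sum>j=0..h. Theta j i s))"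
    if "i \<in> {1..n}" for i
  proof -
    have "cov M (\<lambda>\<omega>. \<Sum>j=0..h. Y (t + int j) i \<omega>) z = (\<Sum>j=0..h. \<Sum>s=1..S. Theta j i s * \<alpha> s)"
      using that Y_meas z_meas Y_L2 z_L2 by (simp add: cov_sum_left cov_Y)
    then show ?thesis
      by (simp add: sum_distrib_left mult.commute sum.swap[of _ "{0..h}"])
  qed
  show ?thesis
    using n cov_cumulative[of 1] cov_cumulative[of n]
      sum_ratio_eq_weighted_average[of "{1..S}" "\<lambda>s. \<Sum>j=0..h. Theta j 1 s" \<alpha>] theta_x_nz
    by (simp add: \<alpha>_def)
qed

end
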